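(* Let $K$ be an infinite compact Hausdorff space with finitely many accumulation points, let $K'$ be its (finite) set of accumulation points, and let $F:B_{C(K)}\to B_{C(K)}$ be a non-expansive bijection. Then there exist a homeomorphism $\sigma:K\to K$ and a continuous function $\alpha:K\to\{-1,1\}$ such that for every $f\in B_{C(K)}$ and every $a\in K\setminus K'$: (1) if $f(a)=0$, then $F(f)(\sigma(a))=0$; (2) if $f(a)\alpha(a)<0$, then $F(f)(\sigma(a))\leq 0$; (3) if $f(a)\alpha(a)>0$, then $F(f)(\sigma(a))\geq 0$.
   Context: $C(K)$ is the Banach space of real-valued continuous functions on $K$ with the supremum norm and $B_{C(K)}$ its closed unit ball. A map is non-expansive if it is $1$-Lipschitz. *)

theory Defs
  imports "HOL-Analysis.Analysis"
begin

end

(* The non-expansive bijection F fixes 0 and maps the segment through the indicator e_a of an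
   isolated point a onto a segment through a single indicator e_b, with b = tau(a) and a fixed
   orientation beta(a) = +-1: the unit ball is covered by the unit balls around F(t e_a) and
   F(-t e_a), which forces both to be opposite multiples of one indicator, and continuity in t
   keeps b and the orientation fixed.  Comparing with these segments shows that F^-1 maps
   {-1,1}-valued functions y to {-1,1}-valued functions with F^-1(y)(a) = beta(a) y(tau(a)), and
   that tau is a bijection of the isolated points.  So alpha = F^-1(1) extends beta, and
   C |-> {alpha F^-1(sign_C) = 1} is a homomorphism of the Boolean algebra of clopen sets; the dual
   map sigma of points extends tau and is a homeomorphism, because the limit points are finitely
   many.  Finally, f is within max(1, |f(a) - eps|) + delta of a clopen sign function s with
   s(a) = eps, and F(s)(sigma a) = alpha(a) s(a); non-expansiveness yields the sign conditions. *)

theory Submission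
  imports Defs
begin

section \<open>Spaces with finitely many limit points\<close>

lemma obtain_isolated_in_open:
  fixes V :: "'a::t1_space set"
  assumes fin: "finite {x :: 'a. x islimpt UNIV}" and "open V" "V \<noteq> {}"
  obtains a where "a \<in> V" "\<not> a islimpt UNIV"
proof (cases "V \<subseteq> {x. x islimpt UNIV}")
  case True
  obtain v where v: "v \<in> V" using \<open>V \<noteq> {}\<close> by blast
  have "closed (V - {v})" using True fin by (meson finite_Diff finite_imp_closed finite_subset)
  then have "open (V - (V - {v}))" using \<open>open V\<close> by (intro open_Diff)
  moreover have "V - (V - {v}) = {v}" using v by blast
  ultimately have "\<not> v islimpt UNIV" by (simp add: islimpt_UNIV_iff)
  with True v show thesis by blast
qed (use that in blast)

lemma continuous_on_eq_if_eq_on_isolated: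
  fixes g h :: "'a::t1_space \<Rightarrow> 'b::t2_space"
  assumes fin: "finite {x :: 'a. x islimpt UNIV}"
    and "continuous_on UNIV g" "continuous_on UNIV h"
    and "\<And>a. \<not> a islimpt UNIV \<Longrightarrow> g a = h a"
  shows "g = h"
proof (rule ccontr)
  assume "g \<noteq> h"
  then have "{x. g x \<noteq> h x} \<noteq> {}" by auto
  moreover have "open {x. g x \<noteq> h x}" using assms(2,3) by (rule open_Collect_neq)
  ultimately obtain a where "a \<in> {x. g x \<noteq> h x}" "\<not> a islimpt UNIV"
    using obtain_isolated_in_open[OF fin] by blast
  with assms(4) show False by simp
qed

lemma clopen_eq_if_eq_on_isolated:
  fixes U V :: "'a::t1_space set"
  assumes fin: "finite {x :: 'a. x islimpt UNIV}"
    and "open U" "closed U" "open V" "closed V"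
    and "\<And>a. \<not> a islimpt UNIV \<Longrightarrow> a \<in> U \<longleftrightarrow> a \<in> V"
  shows "U = V"
proof -
  have empty: "W = {}" if "open W" "\<And>a. \<not> a islimpt UNIV \<Longrightarrow> a \<notin> W" for W :: "'a set"
  proof (rule ccontr)
    assume "W \<noteq> {}"
    then obtain a where "a \<in> W" "\<not> a islimpt UNIV"
      using obtain_isolated_in_open[OF fin \<open>open W\<close>] by blast
    with that(2) show False by blast
  qed
  have "U - V = {}" using assms(2,5,6) by (intro empty open_Diff) auto
  moreover have "V - U = {}" using assms(3,4,6) by (intro empty open_Diff) auto
  ultimately show ?thesis by blast
qed

lemma two_isolated_near_limpt:
  fixes p :: "'a::t1_space"
  assumes fin: "finite {x :: 'a. x islimpt UNIV}"
    and "open U" "p \<in> U" "p islimpt UNIV"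
  obtains a1 a2 where "a1 \<in> U" "a2 \<in> U" "a1 \<noteq> a2" "\<not> a1 islimpt UNIV" "\<not> a2 islimpt UNIV"
proof -
  obtain a1 where a1: "a1 \<in> U" "\<not> a1 islimpt UNIV"
    using obtain_isolated_in_open[OF fin \<open>open U\<close>] \<open>p \<in> U\<close> by blast
  have "p \<in> U - {a1}" using a1 assms(3,4) by auto
  moreover have "open (U - {a1})" using \<open>open U\<close> by (simp add: open_Diff)
  ultimately obtain a2 where "a2 \<in> U - {a1}" "\<not> a2 islimpt UNIV"
    using obtain_isolated_in_open[OF fin] by blast
  with a1 that show thesis by blast
qed

lemma Hausdorff_space_euclidean_t2: "Hausdorff_space (euclidean :: 'a::t2_space topology)"
  unfolding Hausdorff_space_def disjnt_def using hausdorff by auto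

lemma clopen_separation:
  fixes P N :: "'a::t2_space set"
  assumes cpt: "compact (UNIV :: 'a set)" and fin: "finite {x :: 'a. x islimpt UNIV}"
    and "closed P" "closed N" "P \<inter> N = {}"
  obtains C where "open C" "closed C" "P \<subseteq> C" "C \<inter> N = {}"
proof -
  define N' where "N' = N \<union> ({x. x islimpt UNIV} - P)"
  have "closed N'"
    unfolding N'_def using fin \<open>closed N\<close> by (simp add: closed_Un finite_imp_closed)
  have "compact N'" using compact_Int_closed[OF cpt \<open>closed N'\<close>] by simp
  moreover have "compact P" using compact_Int_closed[OF cpt \<open>closed P\<close>] by simp
  moreover have "disjnt P N'" using assms(5) unfolding N'_def disjnt_def by blast
  ultimately obtain U V where "openin euclidean U" "openin euclidean V" "P \<subseteq> U" "N' \<subseteq> V" "disjnt U V"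
    using Hausdorff_space_compact_separation[OF Hausdorff_space_euclidean_t2, of P N'] by auto
  then have UV: "open U" "open V" "P \<subseteq> U" "N' \<subseteq> V" "U \<inter> V = {}" by (simp_all add: disjnt_def)
  then have UV': "closure U \<inter> V = {}" using open_Int_closure_eq_empty[of V U] by blast
  \<comment> \<open>the boundary of \<open>U\<close> consists of isolated points, so \<open>closure U\<close> is open\<close>
  have "open (closure U)"
  proof (rule Topological_Spaces.openI)
    fix x assume x: "x \<in> closure U"
    show "\<exists>T. open T \<and> x \<in> T \<and> T \<subseteq> closure U"
    proof (cases "x \<in> U")
      case True
      then show ?thesis using UV(1) closure_subset by blast
    next
      case False
      have "x \<notin> N'" using x UV' UV(4) by blast
      moreover have "x \<notin> P" using False UV(3) by blast
      ultimately have "open {x}" unfolding N'_def by (simp add: islimpt_UNIV_iff)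
      then show ?thesis using x by blast
    qed
  qed
  moreover have "closure U \<inter> N = {}" using UV' UV(4) unfolding N'_def by blast
  ultimately show thesis using that[of "closure U"] UV(3) closure_subset by blast
qed

section \<open>Bounded continuous real functions\<close>

lemma apply_Bcontfun_compact:
  fixes f :: "'a::topological_space \<Rightarrow> 'b::metric_space"
  assumes "compact (UNIV :: 'a set)" "continuous_on UNIV f"
  shows "apply_bcontfun (Bcontfun f) = f"
proof (rule Bcontfun_inverse)
  have "bounded (range f)"
    by (rule compact_imp_bounded, rule compact_continuous_image) (use assms in simp_all)
  then show "f \<in> bcontfun" using assms(2) by (simp add: bcontfun_def)
qed

lemma apply_Bcontfun_clopen_cases:
  fixes C :: "'a::topological_space set" and c1 c2 :: "'b::metric_space"
  assumes "open C" "closed C"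
  shows "apply_bcontfun (Bcontfun (\<lambda>s. if s \<in> C then c1 else c2)) = (\<lambda>s. if s \<in> C then c1 else c2)"
proof (rule Bcontfun_inverse)
  have "continuous_on (C \<union> -C) (\<lambda>s. if s \<in> C then c1 else c2)"
    using assms by (intro continuous_on_cases) auto
  moreover have "bounded (range (\<lambda>s. if s \<in> C then c1 else c2))"
    by (rule finite_imp_bounded) (rule finite_subset[of _ "{c1, c2}"], auto)
  ultimately show "(\<lambda>s. if s \<in> C then c1 else c2) \<in> bcontfun"
    by (simp add: bcontfun_def)
qed

lemma abs_apply_le_norm_bcontfun: "\<bar>apply_bcontfun f x\<bar> \<le> norm f"
  for f :: "'a::topological_space \<Rightarrow>\<^sub>C real"
  using norm_bounded[of f x] by simp

lemma norm_bcontfun_le: "(\<And>x. \<bar>apply_bcontfun f x\<bar> \<le> r) \<Longrightarrow> norm f \<le> r"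
  for f :: "'a::topological_space \<Rightarrow>\<^sub>C real"
  using norm_bound[of f r] by simp

lemma abs_diff_apply_le_dist_bcontfun: "\<bar>apply_bcontfun f x - apply_bcontfun g x\<bar> \<le> dist f g"
  for f g :: "'a::topological_space \<Rightarrow>\<^sub>C real"
  using dist_bounded[of f x g] by (simp add: dist_real_def)

lemma dist_bcontfun_le: "(\<And>x. \<bar>apply_bcontfun f x - apply_bcontfun g x\<bar> \<le> r) \<Longrightarrow> dist f g \<le> r"
  for f g :: "'a::topological_space \<Rightarrow>\<^sub>C real"
  using dist_bound[of f g r] by (simp add: dist_real_def)

lemma continuous_on_apply_bcontfun_at:
  fixes g :: "'c::topological_space \<Rightarrow> ('a::topological_space \<Rightarrow>\<^sub>C real)"
  assumes "continuous_on S g"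
  shows "continuous_on S (\<lambda>t. apply_bcontfun (g t) x)"
proof -
  have "continuous_on UNIV (\<lambda>f :: 'a \<Rightarrow>\<^sub>C real. apply_bcontfun f x)"
    by (rule lipschitz_on_continuous_on[of 1], rule lipschitz_onI) (simp_all add: dist_bounded)
  then show ?thesis using assms by (rule continuous_on_compose2) auto
qed

text \<open>\<open>spike a\<close> and \<open>clopen_sign C\<close> are junk unless \<open>a\<close> is isolated, resp. \<open>C\<close> is clopen,
  because \<open>Bcontfun\<close> is unspecified on discontinuous functions.\<close>

definition spike :: "'a::topological_space \<Rightarrow> ('a \<Rightarrow>\<^sub>C real)" where
  "spike a = Bcontfun (\<lambda>s. if s \<in> {a} then 1 else 0)"

definition clopen_sign :: "'a::topological_space set \<Rightarrow> ('a \<Rightarrow>\<^sub>C real)" where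
  "clopen_sign C = Bcontfun (\<lambda>s. if s \<in> C then 1 else -1)"

definition unimodular :: "('a::topological_space \<Rightarrow>\<^sub>C real) \<Rightarrow> bool" where
  "unimodular f \<longleftrightarrow> (\<forall>s. \<bar>apply_bcontfun f s\<bar> = 1)"

lemma spike_apply [simp]:
  fixes a :: "'a::t1_space"
  assumes "\<not> a islimpt UNIV"
  shows "apply_bcontfun (spike a) s = (if s = a then 1 else 0)"
proof -
  have "open {a}" "closed {a}" using assms by (simp_all add: islimpt_UNIV_iff)
  from fun_cong[OF apply_Bcontfun_clopen_cases[OF this, of "1::real" 0], of s]
  show ?thesis unfolding spike_def by simp
qed

lemma norm_spike:
  fixes a :: "'a::t1_space"
  assumes "\<not> a islimpt UNIV"
  shows "norm (spike a) = 1"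
  using norm_bcontfun_le[of "spike a" 1] abs_apply_le_norm_bcontfun[of "spike a" a] assms
  by simp

lemma norm_scaled_spike:
  fixes a :: "'a::t1_space"
  assumes "\<not> a islimpt UNIV"
  shows "norm (t *\<^sub>R spike a) = \<bar>t\<bar>"
  using norm_spike[OF assms] by simp

lemma clopen_sign_apply:
  "open C \<Longrightarrow> closed C \<Longrightarrow> apply_bcontfun (clopen_sign C) s = (if s \<in> C then 1 else -1)"
  unfolding clopen_sign_def by (simp add: apply_Bcontfun_clopen_cases)

lemma unimodular_clopen_sign: "open C \<Longrightarrow> closed C \<Longrightarrow> unimodular (clopen_sign C)"
  by (simp add: unimodular_def clopen_sign_apply)

lemma unimodular_const_one: "unimodular (const_bcontfun 1)"
  by (simp add: unimodular_def)

lemma norm_le_one_if_unimodular: "unimodular f \<Longrightarrow> norm f \<le> 1"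
  unfolding unimodular_def by (rule norm_bcontfun_le) simp

lemma exists_isolated_nonzero:
  fixes c :: "'a::t1_space \<Rightarrow>\<^sub>C real"
  assumes fin: "finite {x :: 'a. x islimpt UNIV}" and "c \<noteq> 0"
  obtains s where "\<not> s islimpt UNIV" "apply_bcontfun c s \<noteq> 0"
proof -
  have "{x. apply_bcontfun c x \<noteq> 0} \<noteq> {}" using assms(2) bcontfun_eqI[of c 0] by auto
  moreover have "open {x. apply_bcontfun c x \<noteq> 0}" by (rule open_Collect_neq) auto
  ultimately obtain s where "s \<in> {x. apply_bcontfun c x \<noteq> 0}" "\<not> s islimpt UNIV"
    using obtain_isolated_in_open[OF fin] by blast
  with that show thesis by simp
qed

lemma eq_scaled_spike:
  fixes c :: "'a::t1_space \<Rightarrow>\<^sub>C real"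
  assumes fin: "finite {x :: 'a. x islimpt UNIV}" and b: "\<not> b islimpt UNIV"
    and off: "\<And>s. \<not> s islimpt UNIV \<Longrightarrow> s \<noteq> b \<Longrightarrow> apply_bcontfun c s = 0"
  shows "c = apply_bcontfun c b *\<^sub>R spike b"
proof -
  have "apply_bcontfun c = apply_bcontfun (apply_bcontfun c b *\<^sub>R spike b)"
    by (rule continuous_on_eq_if_eq_on_isolated[OF fin continuous_on_apply_bcontfun
          continuous_on_apply_bcontfun]) (use b off in auto)
  then show ?thesis by (simp add: bcontfun_eqI)
qed

lemma one_lt_dist_if_opposite_sign:
  fixes w c :: "'a::topological_space \<Rightarrow>\<^sub>C real"
  assumes "apply_bcontfun c s \<noteq> 0" "apply_bcontfun w s = - sgn (apply_bcontfun c s)"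
  shows "1 < dist w c"
proof -
  have "\<bar>- sgn v - v\<bar> = 1 + \<bar>v\<bar>" if "v \<noteq> 0" for v :: real
    using that by (cases "v > 0") (simp_all add: sgn_if)
  then have "1 < \<bar>apply_bcontfun w s - apply_bcontfun c s\<bar>"
    unfolding assms(2) using assms(1) by simp
  then show ?thesis using abs_diff_apply_le_dist_bcontfun[of w s c] by linarith
qed

text \<open>Otherwise a function of the unit ball taking the values \<open>-sgn (c s)\<close> at \<open>s\<close> and
  \<open>-sgn (d t)\<close> at \<open>t\<close> would be at distance more than one from both \<open>c\<close> and \<open>d\<close>.\<close>

lemma two_ball_cover_nonzero_values:
  fixes c d :: "'a::t1_space \<Rightarrow>\<^sub>C real"
  assumes cover: "\<And>w. norm w \<le> 1 \<Longrightarrow> dist w c \<le> 1 \<or> dist w d \<le> 1"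
    and iso: "\<not> s islimpt UNIV" "\<not> t islimpt UNIV"
    and nz: "apply_bcontfun c s \<noteq> 0" "apply_bcontfun d t \<noteq> 0"
  shows "s = t" and "apply_bcontfun c s * apply_bcontfun d t < 0"
proof -
  have far: False if "norm w \<le> 1" "apply_bcontfun w s = - sgn (apply_bcontfun c s)"
    "apply_bcontfun w t = - sgn (apply_bcontfun d t)" for w
    using cover[OF that(1)] one_lt_dist_if_opposite_sign[OF nz(1) that(2)]
      one_lt_dist_if_opposite_sign[OF nz(2) that(3)] by linarith
  show "s = t"
  proof (rule ccontr)
    assume "s \<noteq> t"
    show False
    proof (rule far[of "(- sgn (apply_bcontfun c s)) *\<^sub>R spike s + (- sgn (apply_bcontfun d t)) *\<^sub>R spike t"])
      show "norm ((- sgn (apply_bcontfun c s)) *\<^sub>R spike s + (- sgn (apply_bcontfun d t)) *\<^sub>R spike t) \<le> 1"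
        using iso \<open>s \<noteq> t\<close> by (intro norm_bcontfun_le) (simp add: sgn_if)
    qed (use iso \<open>s \<noteq> t\<close> in simp_all)
  qed
  show "apply_bcontfun c s * apply_bcontfun d t < 0"
  proof (rule ccontr)
    assume "\<not> apply_bcontfun c s * apply_bcontfun d t < 0"
    moreover have "apply_bcontfun c s * apply_bcontfun d t \<noteq> 0" using nz by simp
    ultimately have "0 < apply_bcontfun c s * apply_bcontfun d t" by linarith
    then have same_sgn: "sgn (apply_bcontfun d t) = sgn (apply_bcontfun c s)"
      by (auto simp: sgn_if zero_less_mult_iff)
    show False
    proof (rule far[of "(- sgn (apply_bcontfun c s)) *\<^sub>R spike s"])
      show "norm ((- sgn (apply_bcontfun c s)) *\<^sub>R spike s) \<le> 1"
        using iso by (intro norm_bcontfun_le) (simp add: sgn_if)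
    qed (use iso \<open>s = t\<close> same_sgn in simp_all)
  qed
qed

lemma two_ball_cover_imp_opposite_spikes:
  fixes c d :: "'a::t1_space \<Rightarrow>\<^sub>C real"
  assumes fin: "finite {x :: 'a. x islimpt UNIV}" and "c \<noteq> 0" "d \<noteq> 0"
    and cover: "\<And>w. norm w \<le> 1 \<Longrightarrow> dist w c \<le> 1 \<or> dist w d \<le> 1"
  obtains b where "\<not> b islimpt UNIV" "c = apply_bcontfun c b *\<^sub>R spike b"
    "d = apply_bcontfun d b *\<^sub>R spike b" "apply_bcontfun c b * apply_bcontfun d b < 0"
proof -
  have nonzero: "s = t" "apply_bcontfun c s * apply_bcontfun d t < 0"
    if "\<not> s islimpt UNIV" "\<not> t islimpt UNIV" "apply_bcontfun c s \<noteq> 0" "apply_bcontfun d t \<noteq> 0"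
    for s t
    using two_ball_cover_nonzero_values[of c d s t] cover that by blast+
  obtain b where b: "\<not> b islimpt UNIV" "apply_bcontfun c b \<noteq> 0"
    using exists_isolated_nonzero[OF fin \<open>c \<noteq> 0\<close>] by blast
  obtain b' where b': "\<not> b' islimpt UNIV" "apply_bcontfun d b' \<noteq> 0"
    using exists_isolated_nonzero[OF fin \<open>d \<noteq> 0\<close>] by blast
  have "b' = b" using nonzero(1)[OF b(1) b'(1) b(2) b'(2)] by simp
  with b' have db: "apply_bcontfun d b \<noteq> 0" by simp
  show thesis
  proof (rule that[OF b(1)])
    show "c = apply_bcontfun c b *\<^sub>R spike b"
      by (rule eq_scaled_spike[OF fin b(1)]) (use nonzero(1)[OF _ b(1) _ db] in blast)
    show "d = apply_bcontfun d b *\<^sub>R spike b"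
      by (rule eq_scaled_spike[OF fin b(1)]) (use nonzero(1)[OF b(1) _ b(2)] in blast)
    show "apply_bcontfun c b * apply_bcontfun d b < 0"
      by (rule nonzero(2)[OF b(1) b(1) b(2) db])
  qed
qed

lemma clopen_sign_near:
  fixes f :: "'a::t2_space \<Rightarrow>\<^sub>C real"
  assumes cpt: "compact (UNIV :: 'a set)" and fin: "finite {x :: 'a. x islimpt UNIV}"
    and f: "norm f \<le> 1" and a: "\<not> a islimpt UNIV" and \<epsilon>: "\<epsilon> = 1 \<or> \<epsilon> = -1" and "0 < \<delta>"
  obtains C where "open C" "closed C" "apply_bcontfun (clopen_sign C) a = \<epsilon>"
    "dist f (clopen_sign C) \<le> max (1 + \<delta>) \<bar>apply_bcontfun f a - \<epsilon>\<bar>"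
proof -
  have fb: "\<bar>apply_bcontfun f x\<bar> \<le> 1" for x
    using abs_apply_le_norm_bcontfun[of f x] f by linarith
  obtain C where C: "open C" "closed C"
      "{x. \<delta> \<le> apply_bcontfun f x} \<subseteq> C" "C \<inter> {x. apply_bcontfun f x \<le> - \<delta>} = {}"
  proof (rule clopen_separation[OF cpt fin])
    show "closed {x. \<delta> \<le> apply_bcontfun f x}" "closed {x. apply_bcontfun f x \<le> - \<delta>}"
      by (intro closed_Collect_le continuous_intros; simp)+
    show "{x. \<delta> \<le> apply_bcontfun f x} \<inter> {x. apply_bcontfun f x \<le> - \<delta>} = {}"
      using \<open>0 < \<delta>\<close> by auto
  qed
  define C' where "C' = (if \<epsilon> = 1 then C \<union> {a} else C - {a})"
  have "open {a}" using a by (simp add: islimpt_UNIV_iff)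
  then have "open (C \<union> {a})" "closed (C \<union> {a})" "open (C - {a})" "closed (C - {a})"
    using C(1,2) by (intro open_Un closed_Un open_Diff closed_Diff; simp)+
  then have C': "open C'" "closed C'" unfolding C'_def by simp_all
  note sign_C' = clopen_sign_apply[OF C']
  have at_a: "apply_bcontfun (clopen_sign C') a = \<epsilon>"
    using \<epsilon> unfolding sign_C' by (auto simp: C'_def)
  show thesis
  proof (rule that[OF C' at_a])
    show "dist f (clopen_sign C') \<le> max (1 + \<delta>) \<bar>apply_bcontfun f a - \<epsilon>\<bar>"
    proof (rule dist_bcontfun_le)
      fix x
      show "\<bar>apply_bcontfun f x - apply_bcontfun (clopen_sign C') x\<bar> \<le> max (1 + \<delta>) \<bar>apply_bcontfun f a - \<epsilon>\<bar>"
      proof (cases "x = a")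
        case False
        then have "x \<in> C' \<longleftrightarrow> x \<in> C" unfolding C'_def by auto
        moreover have "x \<in> C \<Longrightarrow> - \<delta> < apply_bcontfun f x" using C(4) by force
        moreover have "x \<notin> C \<Longrightarrow> apply_bcontfun f x < \<delta>" using C(3) by force
        ultimately show ?thesis
          using fb[of x] unfolding sign_C' by (cases "x \<in> C") (simp_all add: abs_le_iff)
      qed (simp add: at_a)
    qed
  qed
qed

section \<open>Non-expansive bijections of the unit ball\<close>

locale nonexpansive_ball_bijection =
  fixes F :: "('a::t2_space \<Rightarrow>\<^sub>C real) \<Rightarrow> ('a \<Rightarrow>\<^sub>C real)"
  assumes compact_UNIV: "compact (UNIV :: 'a set)"
    and finite_limpts: "finite {x :: 'a. x islimpt UNIV}"
    and bij: "bij_betw F {f. norm f \<le> 1} {f. norm f \<le> 1}"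
    and nonexpansive: "\<And>f g. norm f \<le> 1 \<Longrightarrow> norm g \<le> 1 \<Longrightarrow> dist (F f) (F g) \<le> dist f g"
begin

definition Finv :: "('a \<Rightarrow>\<^sub>C real) \<Rightarrow> ('a \<Rightarrow>\<^sub>C real)" where
  "Finv = inv_into {f. norm f \<le> 1} F"

lemma F_eqD: "norm f \<le> 1 \<Longrightarrow> norm g \<le> 1 \<Longrightarrow> F f = F g \<Longrightarrow> f = g"
  using bij by (auto simp: bij_betw_def inj_on_def)

lemma norm_Finv_le: "norm g \<le> 1 \<Longrightarrow> norm (Finv g) \<le> 1"
  using bij_betwE[OF bij_betw_inv_into[OF bij]] unfolding Finv_def by auto

lemma F_Finv: "norm g \<le> 1 \<Longrightarrow> F (Finv g) = g"
  using bij_betw_inv_into_right[OF bij] unfolding Finv_def by auto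

lemma abs_diff_F_apply_le:
  "norm f \<le> 1 \<Longrightarrow> norm g \<le> 1 \<Longrightarrow> \<bar>apply_bcontfun (F f) s - apply_bcontfun (F g) s\<bar> \<le> dist f g"
  using abs_diff_apply_le_dist_bcontfun[of "F f" s "F g"] nonexpansive[of f g] by linarith

text \<open>Otherwise the point of norm one opposite to \<open>F 0\<close> would be at distance
  \<open>1 + norm (F 0)\<close> from \<open>F 0\<close>, yet it has a preimage in the unit ball.\<close>

lemma F_zero: "F 0 = 0"
proof (rule ccontr)
  assume "F 0 \<noteq> 0"
  then have n: "0 < norm (F 0)" by simp
  define y where "y = (- 1 / norm (F 0)) *\<^sub>R F 0"
  have "norm y = 1" unfolding y_def using n by simp
  define c where "c = 1 / norm (F 0) + 1"
  have "0 < c" unfolding c_def using n by (intro add_pos_pos) simp_all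
  have "y - F 0 = (- c) *\<^sub>R F 0" unfolding y_def c_def by (simp add: algebra_simps)
  then have "dist y (F 0) = c * norm (F 0)" using \<open>0 < c\<close> by (simp add: dist_norm)
  also have "\<dots> = 1 + norm (F 0)" using n by (simp add: c_def field_simps)
  finally have "dist y (F 0) = 1 + norm (F 0)" .
  moreover have "dist y (F 0) \<le> 1"
    using nonexpansive[OF norm_Finv_le, of y 0] F_Finv[of y] \<open>norm y = 1\<close> norm_Finv_le[of y] by simp
  ultimately show False using n by simp
qed

lemma continuous_on_F_ray:
  fixes a :: 'a
  assumes "\<not> a islimpt UNIV"
  shows "continuous_on {-1..1} (\<lambda>t. F (t *\<^sub>R spike a))"
proof (rule lipschitz_on_continuous_on[of 1], rule lipschitz_onI)
  fix s t :: real assume "s \<in> {-1..1}" "t \<in> {-1..1}"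
  then have "dist (F (s *\<^sub>R spike a)) (F (t *\<^sub>R spike a)) \<le> dist (s *\<^sub>R spike a) (t *\<^sub>R spike a)"
    by (intro nonexpansive) (auto simp: norm_spike[OF assms])
  also have "\<dots> = dist s t"
    using norm_scaled_spike[OF assms, of "s - t"] by (simp add: dist_norm scaleR_diff_left dist_real_def)
  finally show "dist (F (s *\<^sub>R spike a)) (F (t *\<^sub>R spike a)) \<le> 1 * dist s t" by simp
qed simp

lemma F_scaled_spike_nonzero:
  assumes "\<not> a islimpt UNIV" "t \<noteq> 0" "\<bar>t\<bar> \<le> 1"
  shows "F (t *\<^sub>R spike a) \<noteq> 0"
  using F_eqD[of "t *\<^sub>R spike a" 0] F_zero norm_scaled_spike[OF assms(1), of t] assms(2,3) by auto

lemma F_opposite_rays_opposite_spikes: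
  assumes a: "\<not> a islimpt UNIV" and t: "0 < t" "t \<le> 1"
  obtains b where "\<not> b islimpt UNIV"
    "F (t *\<^sub>R spike a) = apply_bcontfun (F (t *\<^sub>R spike a)) b *\<^sub>R spike b"
    "F ((- t) *\<^sub>R spike a) = apply_bcontfun (F ((- t) *\<^sub>R spike a)) b *\<^sub>R spike b"
    "apply_bcontfun (F (t *\<^sub>R spike a)) b * apply_bcontfun (F ((- t) *\<^sub>R spike a)) b < 0"
proof (rule two_ball_cover_imp_opposite_spikes[OF finite_limpts])
  show "F (t *\<^sub>R spike a) \<noteq> 0" "F ((- t) *\<^sub>R spike a) \<noteq> 0"
    using F_scaled_spike_nonzero[OF a, of t] F_scaled_spike_nonzero[OF a, of "- t"] t by simp_all
  fix w :: "'a \<Rightarrow>\<^sub>C real" assume w: "norm w \<le> 1"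
  define z where "z = Finv w"
  have z: "norm z \<le> 1" "F z = w" unfolding z_def using w by (simp_all add: norm_Finv_le F_Finv)
  define u where "u = (if 0 \<le> apply_bcontfun z a then t else - t)"
  have "dist z (u *\<^sub>R spike a) \<le> 1"
  proof (rule dist_bcontfun_le)
    fix x
    have "\<bar>apply_bcontfun z x\<bar> \<le> 1" using abs_apply_le_norm_bcontfun[of z x] z(1) by linarith
    then show "\<bar>apply_bcontfun z x - apply_bcontfun (u *\<^sub>R spike a) x\<bar> \<le> 1"
      using t a unfolding u_def by (auto simp: abs_le_iff)
  qed
  moreover have "norm (u *\<^sub>R spike a) \<le> 1" using t by (simp add: u_def norm_spike[OF a])
  ultimately have "dist w (F (u *\<^sub>R spike a)) \<le> 1"
    using nonexpansive[OF z(1)] z(2) by (metis order.trans)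
  then show "dist w (F (t *\<^sub>R spike a)) \<le> 1 \<or> dist w (F ((- t) *\<^sub>R spike a)) \<le> 1"
    unfolding u_def by (auto split: if_splits)
qed

definition spike_target :: "'a \<Rightarrow> 'a" where
  "spike_target a = (SOME b. \<not> b islimpt UNIV \<and> apply_bcontfun (F (spike a)) b \<noteq> 0)"

definition spike_sign :: "'a \<Rightarrow> real" where
  "spike_sign a = sgn (apply_bcontfun (F (spike a)) (spike_target a))"

lemma F_spike:
  assumes a: "\<not> a islimpt UNIV"
  shows "\<not> spike_target a islimpt UNIV"
    and "F (spike a) = apply_bcontfun (F (spike a)) (spike_target a) *\<^sub>R spike (spike_target a)"
    and "apply_bcontfun (F (spike a)) (spike_target a) \<noteq> 0"
proof -
  obtain b where b: "\<not> b islimpt UNIV"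
      "F (1 *\<^sub>R spike a) = apply_bcontfun (F (1 *\<^sub>R spike a)) b *\<^sub>R spike b"
      "apply_bcontfun (F (1 *\<^sub>R spike a)) b * apply_bcontfun (F ((- 1) *\<^sub>R spike a)) b < 0"
    by (rule F_opposite_rays_opposite_spikes[OF a zero_less_one order_refl])
  then have "\<exists>b. \<not> b islimpt UNIV \<and> apply_bcontfun (F (spike a)) b \<noteq> 0" by force
  then have target: "\<not> spike_target a islimpt UNIV" "apply_bcontfun (F (spike a)) (spike_target a) \<noteq> 0"
    unfolding spike_target_def by (metis (mono_tags, lifting) someI_ex)+
  have "apply_bcontfun (F (spike a)) x = 0" if "x \<noteq> b" for x
    using fun_cong[OF arg_cong[OF b(2), of apply_bcontfun], of x] b(1) that by simp
  then have "spike_target a = b" using target(2) by blast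
  then show "\<not> spike_target a islimpt UNIV"
    and "F (spike a) = apply_bcontfun (F (spike a)) (spike_target a) *\<^sub>R spike (spike_target a)"
    and "apply_bcontfun (F (spike a)) (spike_target a) \<noteq> 0"
    using target b(2) by simp_all
qed

lemma spike_sign_cases: "\<not> a islimpt UNIV \<Longrightarrow> spike_sign a = 1 \<or> spike_sign a = -1"
  using F_spike(3) by (simp add: spike_sign_def sgn_if)

text \<open>\<open>ray_gauge a t\<close> is positive when \<open>F (t *\<^sub>R spike a)\<close> is a multiple of the spike at
  \<open>spike_target a\<close> with the orientation it has for \<open>t = 1\<close>, and negative otherwise; being
  continuous and positive at \<open>t = 1\<close>, it is positive on all of \<open>{0<..1}\<close>.\<close>

definition ray_gauge :: "'a \<Rightarrow> real \<Rightarrow> real" where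
  "ray_gauge a t = spike_sign a * apply_bcontfun (F (t *\<^sub>R spike a)) (spike_target a)
    - norm (F (t *\<^sub>R spike a)) / 2"

lemma ray_gauge_eq:
  fixes a :: 'a
  assumes "\<not> b islimpt UNIV" "F (t *\<^sub>R spike a) = u *\<^sub>R spike b"
  shows "ray_gauge a t = spike_sign a * (if b = spike_target a then u else 0) - \<bar>u\<bar> / 2"
  unfolding ray_gauge_def assms(2) using assms(1) by (simp add: norm_spike eq_commute[of b])

lemma ray_gauge_cases:
  fixes a :: 'a
  assumes a: "\<not> a islimpt UNIV" and t: "0 < t" "t \<le> 1"
  defines "b \<equiv> spike_target a"
  obtains (neg) "ray_gauge a t < 0"
    | (pos) "0 < ray_gauge a t"
      "F (t *\<^sub>R spike a) = apply_bcontfun (F (t *\<^sub>R spike a)) b *\<^sub>R spike b"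
      "F ((- t) *\<^sub>R spike a) = apply_bcontfun (F ((- t) *\<^sub>R spike a)) b *\<^sub>R spike b"
      "0 < spike_sign a * apply_bcontfun (F (t *\<^sub>R spike a)) b"
      "spike_sign a * apply_bcontfun (F ((- t) *\<^sub>R spike a)) b < 0"
proof -
  have \<beta>: "spike_sign a = 1 \<or> spike_sign a = -1" by (rule spike_sign_cases[OF a])
  obtain b' where b': "\<not> b' islimpt UNIV"
      "F (t *\<^sub>R spike a) = apply_bcontfun (F (t *\<^sub>R spike a)) b' *\<^sub>R spike b'"
      "F ((- t) *\<^sub>R spike a) = apply_bcontfun (F ((- t) *\<^sub>R spike a)) b' *\<^sub>R spike b'"
      "apply_bcontfun (F (t *\<^sub>R spike a)) b' * apply_bcontfun (F ((- t) *\<^sub>R spike a)) b' < 0"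
    by (rule F_opposite_rays_opposite_spikes[OF a t])
  define u where "u = apply_bcontfun (F (t *\<^sub>R spike a)) b'"
  have "u \<noteq> 0" using b'(4) by (auto simp: u_def)
  have gauge: "ray_gauge a t = spike_sign a * (if b' = b then u else 0) - \<bar>u\<bar> / 2"
    unfolding b_def by (rule ray_gauge_eq[OF b'(1) b'(2)[folded u_def]])
  show thesis
  proof (cases "b' = b \<and> 0 < spike_sign a * u")
    case True
    then have "b' = b" and pos_u: "0 < spike_sign a * u" by simp_all
    have "spike_sign a * apply_bcontfun (F ((- t) *\<^sub>R spike a)) b < 0"
      using pos_u b'(4) \<beta> \<open>b' = b\<close> by (auto simp: u_def mult_less_0_iff)
    moreover have "0 < ray_gauge a t" using gauge pos_u \<beta> \<open>b' = b\<close> by auto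
    ultimately show thesis using pos b'(2,3) pos_u \<open>b' = b\<close> by (simp add: u_def)
  next
    case False
    have "ray_gauge a t < 0"
    proof (cases "b' = b")
      case True
      with False have "spike_sign a * u < 0" using \<beta> \<open>u \<noteq> 0\<close> by auto
      with gauge True show ?thesis by simp
    qed (use gauge \<open>u \<noteq> 0\<close> in simp)
    then show thesis by (rule neg)
  qed
qed

lemma continuous_on_ray_gauge:
  fixes a :: 'a
  assumes "\<not> a islimpt UNIV"
  shows "continuous_on {-1..1} (ray_gauge a)"
  unfolding ray_gauge_def
  by (intro continuous_intros continuous_on_apply_bcontfun_at continuous_on_F_ray[OF assms]) auto

lemma ray_gauge_one_pos:
  fixes a :: 'a
  assumes a: "\<not> a islimpt UNIV"
  shows "0 < ray_gauge a 1"
proof -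
  define c where "c = apply_bcontfun (F (spike a)) (spike_target a)"
  have "F (spike a) = c *\<^sub>R spike (spike_target a)" "c \<noteq> 0"
    using F_spike(2,3)[OF a] unfolding c_def by simp_all
  then have "norm (F (spike a)) = \<bar>c\<bar>" by (simp add: norm_spike[OF F_spike(1)[OF a]])
  then have "ray_gauge a 1 = sgn c * c - \<bar>c\<bar> / 2"
    unfolding ray_gauge_def spike_sign_def by (simp add: c_def)
  then show ?thesis using \<open>c \<noteq> 0\<close> by (cases "0 < c") (auto simp: sgn_if)
qed

lemma F_rays_at_spike_target:
  fixes a :: 'a
  assumes a: "\<not> a islimpt UNIV" and t: "0 < t" "t \<le> 1"
  defines "b \<equiv> spike_target a"
  shows "F (t *\<^sub>R spike a) = apply_bcontfun (F (t *\<^sub>R spike a)) b *\<^sub>R spike b"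
    and "F ((- t) *\<^sub>R spike a) = apply_bcontfun (F ((- t) *\<^sub>R spike a)) b *\<^sub>R spike b"
    and "0 < spike_sign a * apply_bcontfun (F (t *\<^sub>R spike a)) b"
    and "spike_sign a * apply_bcontfun (F ((- t) *\<^sub>R spike a)) b < 0"
proof -
  have "\<not> ray_gauge a t < 0"
  proof
    assume "ray_gauge a t < 0"
    moreover have "continuous_on {t..1} (ray_gauge a)"
      using continuous_on_subset[OF continuous_on_ray_gauge[OF a]] t by auto
    ultimately obtain x where x: "t \<le> x" "x \<le> 1" "ray_gauge a x = 0"
      using IVT'[of "ray_gauge a" t 0 1] ray_gauge_one_pos[OF a] t(2) by auto
    with t show False by (cases rule: ray_gauge_cases[OF a, of x]) auto
  qed
  then have "F (t *\<^sub>R spike a) = apply_bcontfun (F (t *\<^sub>R spike a)) b *\<^sub>R spike b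
      \<and> F ((- t) *\<^sub>R spike a) = apply_bcontfun (F ((- t) *\<^sub>R spike a)) b *\<^sub>R spike b
      \<and> 0 < spike_sign a * apply_bcontfun (F (t *\<^sub>R spike a)) b
      \<and> spike_sign a * apply_bcontfun (F ((- t) *\<^sub>R spike a)) b < 0"
    by (cases rule: ray_gauge_cases[OF a t]) (simp_all add: b_def)
  then show "F (t *\<^sub>R spike a) = apply_bcontfun (F (t *\<^sub>R spike a)) b *\<^sub>R spike b"
    and "F ((- t) *\<^sub>R spike a) = apply_bcontfun (F ((- t) *\<^sub>R spike a)) b *\<^sub>R spike b"
    and "0 < spike_sign a * apply_bcontfun (F (t *\<^sub>R spike a)) b"
    and "spike_sign a * apply_bcontfun (F ((- t) *\<^sub>R spike a)) b < 0"
    by simp_all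
qed

lemma F_scaled_spike:
  fixes a :: 'a
  assumes a: "\<not> a islimpt UNIV" and "\<bar>t\<bar> \<le> 1"
  shows "F (t *\<^sub>R spike a)
    = apply_bcontfun (F (t *\<^sub>R spike a)) (spike_target a) *\<^sub>R spike (spike_target a)"
proof -
  consider "t = 0" | "0 < t" | "0 < - t" by linarith
  then show ?thesis
  proof cases
    case 1
    then show ?thesis by (simp add: F_zero)
  next
    case 2
    then show ?thesis using F_rays_at_spike_target(1)[OF a, of t] assms(2) by simp
  next
    case 3
    then show ?thesis using F_rays_at_spike_target(2)[OF a, of "- t"] assms(2) by simp
  qed
qed

lemma sign_F_scaled_spike:
  fixes a :: 'a
  assumes a: "\<not> a islimpt UNIV" and "t \<noteq> 0" "\<bar>t\<bar> \<le> 1"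
  shows "0 < t * spike_sign a * apply_bcontfun (F (t *\<^sub>R spike a)) (spike_target a)"
proof (cases "0 < t")
  case True
  then show ?thesis
    using F_rays_at_spike_target(3)[OF a, of t] assms(3) by (simp add: mult.assoc)
next
  case False
  then have "0 < - t" using assms(2) by simp
  then show ?thesis
    using F_rays_at_spike_target(4)[OF a, of "- t"] assms(3) by (simp add: mult.assoc mult_neg_neg)
qed

text \<open>If \<open>z a\<close> were not \<open>\<epsilon>\<close>, then \<open>z\<close> would lie within distance one of a point of the ray
  through \<open>-\<epsilon> spike a\<close>, whose image has a value of the wrong sign at \<open>spike_target a\<close>.\<close>

lemma apply_eq_if_F_apply_spike_target:
  fixes a :: 'a
  assumes a: "\<not> a islimpt UNIV" and z: "norm z \<le> 1" and \<epsilon>: "\<epsilon> = 1 \<or> \<epsilon> = -1"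
    and Fz: "apply_bcontfun (F z) (spike_target a) = \<epsilon> * spike_sign a"
  shows "apply_bcontfun z a = \<epsilon>"
proof (rule ccontr)
  assume ne: "apply_bcontfun z a \<noteq> \<epsilon>"
  have \<beta>: "spike_sign a = 1 \<or> spike_sign a = -1" by (rule spike_sign_cases[OF a])
  have zb: "\<bar>apply_bcontfun z x\<bar> \<le> 1" for x
    using abs_apply_le_norm_bcontfun[of z x] z by linarith
  have pos: "0 < 1 - \<epsilon> * apply_bcontfun z a" using zb[of a] ne \<epsilon> by auto
  define t where "t = - \<epsilon> * (1 - \<epsilon> * apply_bcontfun z a) / 2"
  have t: "t \<noteq> 0" "\<bar>t\<bar> \<le> 1" "\<epsilon> * t < 0"
    using zb[of a] pos \<epsilon> unfolding t_def by auto
  have "dist z (t *\<^sub>R spike a) \<le> 1"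
  proof (rule dist_bcontfun_le)
    fix x
    show "\<bar>apply_bcontfun z x - apply_bcontfun (t *\<^sub>R spike a) x\<bar> \<le> 1"
      using zb[of x] zb[of a] \<epsilon> a by (cases "x = a") (auto simp: t_def abs_le_iff field_simps)
  qed
  then have "\<bar>\<epsilon> * spike_sign a - apply_bcontfun (F (t *\<^sub>R spike a)) (spike_target a)\<bar> \<le> 1"
    using abs_diff_F_apply_le[OF z, of "t *\<^sub>R spike a" "spike_target a"] t(2) Fz
    by (simp add: norm_spike[OF a])
  moreover have "0 < t * spike_sign a * apply_bcontfun (F (t *\<^sub>R spike a)) (spike_target a)"
    by (rule sign_F_scaled_spike[OF a t(1,2)])
  ultimately show False
    using \<epsilon> \<beta> t(3) by (auto simp: zero_less_mult_iff abs_le_iff)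
qed

lemma apply_isolated_if_F_unimodular:
  fixes a :: 'a
  assumes a: "\<not> a islimpt UNIV" and x: "norm x \<le> 1" "unimodular (F x)"
  shows "apply_bcontfun x a = spike_sign a * apply_bcontfun (F x) (spike_target a)"
proof (rule apply_eq_if_F_apply_spike_target[OF a x(1)])
  have "spike_sign a = 1 \<or> spike_sign a = -1" by (rule spike_sign_cases[OF a])
  moreover have "\<bar>apply_bcontfun (F x) (spike_target a)\<bar> = 1"
    using x(2) by (simp add: unimodular_def)
  ultimately show "spike_sign a * apply_bcontfun (F x) (spike_target a) = 1
      \<or> spike_sign a * apply_bcontfun (F x) (spike_target a) = -1"
    and "apply_bcontfun (F x) (spike_target a)
      = spike_sign a * apply_bcontfun (F x) (spike_target a) * spike_sign a"
    by (auto simp: abs_if split: if_splits)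
qed

lemma unimodular_if_F_unimodular:
  assumes x: "norm x \<le> 1" "unimodular (F x)"
  shows "unimodular x"
proof -
  have "(\<lambda>s. \<bar>apply_bcontfun x s\<bar>) = (\<lambda>s. 1)"
  proof (rule continuous_on_eq_if_eq_on_isolated[OF finite_limpts])
    fix a :: 'a assume a: "\<not> a islimpt UNIV"
    show "\<bar>apply_bcontfun x a\<bar> = 1"
      using apply_isolated_if_F_unimodular[OF a x] spike_sign_cases[OF a] x(2)
      by (auto simp: unimodular_def abs_mult)
  qed (intro continuous_intros; simp)+
  then show ?thesis unfolding unimodular_def by metis
qed

lemma unimodular_Finv: "unimodular y \<Longrightarrow> unimodular (Finv y)"
  using unimodular_if_F_unimodular norm_Finv_le F_Finv norm_le_one_if_unimodular by metis

lemma Finv_apply_isolated: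
  "unimodular y \<Longrightarrow> \<not> a islimpt UNIV \<Longrightarrow>
    apply_bcontfun (Finv y) a = spike_sign a * apply_bcontfun y (spike_target a)"
  using apply_isolated_if_F_unimodular norm_Finv_le F_Finv norm_le_one_if_unimodular by metis

lemma F_ray_attains:
  fixes a :: 'a
  assumes a: "\<not> a islimpt UNIV" and m: "0 < m"
    "m \<le> apply_bcontfun (F (spike_sign a *\<^sub>R spike a)) (spike_target a)"
  obtains t where "0 < t" "t \<le> 1" "F ((spike_sign a * t) *\<^sub>R spike a) = m *\<^sub>R spike (spike_target a)"
proof -
  have \<beta>: "spike_sign a = 1 \<or> spike_sign a = -1" by (rule spike_sign_cases[OF a])
  define \<rho> where "\<rho> t = apply_bcontfun (F ((spike_sign a * t) *\<^sub>R spike a)) (spike_target a)" for t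
  have "continuous_on {0..1} (\<lambda>t. F ((spike_sign a * t) *\<^sub>R spike a))"
    by (rule continuous_on_compose2[OF continuous_on_F_ray[OF a], of _ "\<lambda>t. spike_sign a * t"])
      (use \<beta> in \<open>auto intro!: continuous_intros\<close>)
  then have "continuous_on {0..1} \<rho>" unfolding \<rho>_def by (rule continuous_on_apply_bcontfun_at)
  moreover have "\<rho> 0 = 0" "m \<le> \<rho> 1" using m(2) by (simp_all add: \<rho>_def F_zero)
  ultimately obtain t where t: "0 \<le> t" "t \<le> 1" "\<rho> t = m"
    using IVT'[of \<rho> 0 m 1] m(1) by auto
  with \<open>\<rho> 0 = 0\<close> m(1) have "0 < t" by (cases "t = 0") auto
  moreover have "F ((spike_sign a * t) *\<^sub>R spike a) = \<rho> t *\<^sub>R spike (spike_target a)"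
    unfolding \<rho>_def by (rule F_scaled_spike[OF a]) (use \<beta> t in auto)
  ultimately show thesis using that t by simp
qed

text \<open>Two isolated points with the same target have rays whose images both pass through
  \<open>m *\<^sub>R spike b\<close> for small \<open>m > 0\<close>, contradicting injectivity of \<open>F\<close>.\<close>

lemma inj_on_spike_target: "inj_on spike_target {a. \<not> a islimpt UNIV}"
proof (rule inj_onI, rule ccontr)
  fix a1 a2 assume a: "a1 \<in> {a. \<not> a islimpt UNIV}" "a2 \<in> {a. \<not> a islimpt UNIV}"
    and eq: "spike_target a1 = spike_target a2" and ne: "a1 \<noteq> a2"
  have a1: "\<not> a1 islimpt UNIV" and a2: "\<not> a2 islimpt UNIV" using a by simp_all
  define \<rho> where "\<rho> a = apply_bcontfun (F (spike_sign a *\<^sub>R spike a)) (spike_target a)" for a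
  have pos: "0 < \<rho> a" if "\<not> a islimpt UNIV" for a
    using sign_F_scaled_spike[OF that, of "spike_sign a"] spike_sign_cases[OF that]
    unfolding \<rho>_def by auto
  define m where "m = min (\<rho> a1) (\<rho> a2)"
  have m: "0 < m" "m \<le> \<rho> a1" "m \<le> \<rho> a2" unfolding m_def using pos a1 a2 by auto
  obtain t1 where t1: "0 < t1" "t1 \<le> 1"
      "F ((spike_sign a1 * t1) *\<^sub>R spike a1) = m *\<^sub>R spike (spike_target a1)"
    using F_ray_attains[OF a1 m(1)] m(2) unfolding \<rho>_def by blast
  obtain t2 where t2: "0 < t2" "t2 \<le> 1"
      "F ((spike_sign a2 * t2) *\<^sub>R spike a2) = m *\<^sub>R spike (spike_target a1)"
    using F_ray_attains[OF a2 m(1)] m(3) eq unfolding \<rho>_def by auto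
  have "(spike_sign a1 * t1) *\<^sub>R spike a1 = (spike_sign a2 * t2) *\<^sub>R spike a2"
    by (rule F_eqD) (use t1 t2 spike_sign_cases[OF a1] spike_sign_cases[OF a2] in
        \<open>auto simp: norm_spike[OF a1] norm_spike[OF a2]\<close>)
  from arg_cong[OF this, of "\<lambda>f. apply_bcontfun f a1"]
  have "spike_sign a1 * t1 = 0" using a1 a2 ne by simp
  then show False using t1(1) spike_sign_cases[OF a1] by auto
qed

text \<open>A missed target \<open>b\<close> would make the preimages of \<open>1\<close> and \<open>1 - 2 spike b\<close> agree at all
  isolated points, hence everywhere.\<close>

lemma spike_target_surj:
  fixes b :: 'a
  assumes b: "\<not> b islimpt UNIV"
  shows "\<exists>a. \<not> a islimpt UNIV \<and> spike_target a = b"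
proof (rule ccontr)
  assume none: "\<not> ?thesis"
  define y1 :: "'a \<Rightarrow>\<^sub>C real" where "y1 = const_bcontfun 1"
  define y2 where "y2 = y1 - 2 *\<^sub>R spike b"
  have y: "unimodular y1" "unimodular y2" unfolding unimodular_def y1_def y2_def
    by (simp_all add: b)
  have "apply_bcontfun (Finv y1) = apply_bcontfun (Finv y2)"
  proof (rule continuous_on_eq_if_eq_on_isolated[OF finite_limpts])
    fix a :: 'a assume a: "\<not> a islimpt UNIV"
    then have "spike_target a \<noteq> b" using none by blast
    then show "apply_bcontfun (Finv y1) a = apply_bcontfun (Finv y2) a"
      using Finv_apply_isolated[OF y(1) a] Finv_apply_isolated[OF y(2) a] b
      by (simp add: y1_def y2_def)
  qed simp_all
  then have "y1 = y2"
    using F_Finv[OF norm_le_one_if_unimodular[OF y(1)]] F_Finv[OF norm_le_one_if_unimodular[OF y(2)]]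
    by (metis bcontfun_eqI)
  from arg_cong[OF this, of "\<lambda>f. apply_bcontfun f b"] show False
    using b by (simp add: y1_def y2_def)
qed

subsection \<open>The induced homeomorphism\<close>

definition alpha :: "'a \<Rightarrow>\<^sub>C real" where
  "alpha = Finv (const_bcontfun 1)"

lemma unimodular_alpha: "unimodular alpha"
  unfolding alpha_def by (rule unimodular_Finv[OF unimodular_const_one])

lemma alpha_isolated: "\<not> a islimpt UNIV \<Longrightarrow> apply_bcontfun alpha a = spike_sign a"
  unfolding alpha_def by (simp add: Finv_apply_isolated[OF unimodular_const_one])

text \<open>For a clopen set \<open>C\<close>, \<open>pullback C\<close> will turn out to be the preimage of \<open>C\<close> under the
  homeomorphism \<open>\<sigma>\<close>; it is defined before \<open>\<sigma>\<close>, which is then recovered from it.\<close>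

definition pullback :: "'a set \<Rightarrow> 'a set" where
  "pullback C = {s. apply_bcontfun alpha s * apply_bcontfun (Finv (clopen_sign C)) s = 1}"

lemma clopen_pullback:
  assumes "open C" "closed C"
  shows "open (pullback C)" "closed (pullback C)"
proof -
  define p where "p s = apply_bcontfun alpha s * apply_bcontfun (Finv (clopen_sign C)) s" for s
  have cont: "continuous_on UNIV p" unfolding p_def by (intro continuous_intros) simp_all
  have abs1: "\<bar>p s\<bar> = 1" for s
    using unimodular_alpha unimodular_Finv[OF unimodular_clopen_sign[OF assms]]
    by (simp add: p_def unimodular_def abs_mult)
  have "p s = 1 \<longleftrightarrow> 0 < p s" for s using abs1[of s] by (cases "0 < p s") auto
  then have "pullback C = {s. 0 < p s}" unfolding pullback_def p_def[symmetric] by blast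
  then show "open (pullback C)" using open_Collect_less[OF continuous_on_const cont] by simp
  show "closed (pullback C)"
    unfolding pullback_def p_def[symmetric] by (rule closed_Collect_eq[OF cont continuous_on_const])
qed

lemma isolated_in_pullback_iff:
  assumes "open C" "closed C" and a: "\<not> a islimpt UNIV"
  shows "a \<in> pullback C \<longleftrightarrow> spike_target a \<in> C"
  using Finv_apply_isolated[OF unimodular_clopen_sign[OF assms(1,2)] a] alpha_isolated[OF a]
    spike_sign_cases[OF a] clopen_sign_apply[OF assms(1,2)]
  by (auto simp: pullback_def)

lemma pullback_empty: "pullback {} = {}"
  by (rule clopen_eq_if_eq_on_isolated[OF finite_limpts])
    (simp_all add: clopen_pullback isolated_in_pullback_iff)

lemma pullback_Compl: "open C \<Longrightarrow> closed C \<Longrightarrow> pullback (- C) = - pullback C"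
  by (rule clopen_eq_if_eq_on_isolated[OF finite_limpts])
    (simp_all add: clopen_pullback isolated_in_pullback_iff open_Compl closed_Compl)

lemma pullback_Inter:
  assumes "finite G" "\<And>C. C \<in> G \<Longrightarrow> open C \<and> closed C"
  shows "pullback (\<Inter>G) = (\<Inter>C\<in>G. pullback C)"
proof (rule clopen_eq_if_eq_on_isolated[OF finite_limpts])
  have "open (\<Inter>G)" "closed (\<Inter>G)" using assms by auto
  then show "open (pullback (\<Inter>G))" "closed (pullback (\<Inter>G))" by (simp_all add: clopen_pullback)
  show "open (\<Inter>C\<in>G. pullback C)" "closed (\<Inter>C\<in>G. pullback C)"
    using assms by (auto intro!: open_INT closed_INT simp: clopen_pullback)
  fix a :: 'a assume "\<not> a islimpt UNIV"
  then show "a \<in> pullback (\<Inter>G) \<longleftrightarrow> a \<in> (\<Inter>C\<in>G. pullback C)"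
    using \<open>open (\<Inter>G)\<close> \<open>closed (\<Inter>G)\<close> assms(2) by (simp add: isolated_in_pullback_iff)
qed

lemma pullbacks_common_point: "\<exists>q. \<forall>C. open C \<and> closed C \<and> s \<in> pullback C \<longrightarrow> q \<in> C"
proof -
  define G where "G = {C. open C \<and> closed C \<and> s \<in> pullback C}"
  have "UNIV \<inter> \<Inter>G \<noteq> {}"
  proof (rule compact_imp_fip[OF compact_UNIV])
    show "closed T" if "T \<in> G" for T using that by (simp add: G_def)
    fix G' assume G': "finite G'" "G' \<subseteq> G"
    have "pullback (\<Inter>G') = (\<Inter>C\<in>G'. pullback C)"
      by (rule pullback_Inter) (use G' in \<open>auto simp: G_def\<close>)
    moreover have "s \<in> (\<Inter>C\<in>G'. pullback C)" using G'(2) by (auto simp: G_def)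
    ultimately have "\<Inter>G' \<noteq> {}" using pullback_empty by force
    then show "UNIV \<inter> \<Inter>G' \<noteq> {}" by simp
  qed
  then obtain q where "q \<in> \<Inter>G" by blast
  then show ?thesis unfolding G_def by blast
qed

lemma ex1_point_of_pullbacks: "\<exists>!q. \<forall>C. open C \<and> closed C \<longrightarrow> (q \<in> C \<longleftrightarrow> s \<in> pullback C)"
proof -
  obtain q where q: "\<And>C. open C \<Longrightarrow> closed C \<Longrightarrow> s \<in> pullback C \<Longrightarrow> q \<in> C"
    using pullbacks_common_point[of s] by blast
  have mem: "q \<in> C \<longleftrightarrow> s \<in> pullback C" if C: "open C" "closed C" for C
  proof
    assume "q \<in> C"
    show "s \<in> pullback C"
    proof (rule ccontr)
      assume "s \<notin> pullback C"
      then have "q \<in> - C" using q[of "- C"] C by (simp add: pullback_Compl open_Compl closed_Compl)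
      with \<open>q \<in> C\<close> show False by blast
    qed
  qed (rule q[OF C])
  show ?thesis
  proof (rule ex1I[of _ q])
    show "\<forall>C. open C \<and> closed C \<longrightarrow> (q \<in> C \<longleftrightarrow> s \<in> pullback C)" using mem by blast
    fix q' assume q': "\<forall>C. open C \<and> closed C \<longrightarrow> (q' \<in> C \<longleftrightarrow> s \<in> pullback C)"
    show "q' = q"
    proof (rule ccontr)
      assume "q' \<noteq> q"
      obtain C where C: "open C" "closed C" "{q'} \<subseteq> C" "C \<inter> {q} = {}"
        by (rule clopen_separation[OF compact_UNIV finite_limpts, of "{q'}" "{q}"])
          (use \<open>q' \<noteq> q\<close> in auto)
      then show False using q' mem[OF C(1,2)] by auto
    qed
  qed
qed

definition \<sigma> :: "'a \<Rightarrow> 'a" where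
  "\<sigma> s = (THE q. \<forall>C. open C \<and> closed C \<longrightarrow> (q \<in> C \<longleftrightarrow> s \<in> pullback C))"

lemma sigma_in_clopen_iff: "open C \<Longrightarrow> closed C \<Longrightarrow> \<sigma> s \<in> C \<longleftrightarrow> s \<in> pullback C"
  using theI'[OF ex1_point_of_pullbacks[of s]] unfolding \<sigma>_def by blast

lemma sigma_isolated: "\<not> a islimpt UNIV \<Longrightarrow> \<sigma> a = spike_target a"
  unfolding \<sigma>_def by (rule the1_equality[OF ex1_point_of_pullbacks]) (simp add: isolated_in_pullback_iff)

lemma continuous_on_sigma: "continuous_on UNIV \<sigma>"
  unfolding continuous_on_open_vimage[OF open_UNIV]
proof (intro allI impI)
  fix B :: "'a set" assume "open B"
  show "open (\<sigma> -` B \<inter> UNIV)"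
  proof (rule Topological_Spaces.openI)
    fix s assume "s \<in> \<sigma> -` B \<inter> UNIV"
    obtain C where C: "open C" "closed C" "{\<sigma> s} \<subseteq> C" "C \<inter> - B = {}"
      by (rule clopen_separation[OF compact_UNIV finite_limpts, of "{\<sigma> s}" "- B"])
        (use \<open>open B\<close> \<open>s \<in> \<sigma> -` B \<inter> UNIV\<close> in auto)
    then have "s \<in> pullback C" "pullback C \<subseteq> \<sigma> -` B \<inter> UNIV"
      using sigma_in_clopen_iff[OF C(1,2)] by blast+
    then show "\<exists>T. open T \<and> s \<in> T \<and> T \<subseteq> \<sigma> -` B \<inter> UNIV"
      using clopen_pullback[OF C(1,2)] by blast
  qed
qed

lemma surj_sigma: "range \<sigma> = UNIV"
proof (rule ccontr)
  assume "range \<sigma> \<noteq> UNIV"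
  then have "- range \<sigma> \<noteq> {}" by auto
  moreover have "open (- range \<sigma>)"
    using compact_imp_closed[OF compact_continuous_image[OF continuous_on_sigma compact_UNIV]]
    by (simp add: open_Compl)
  ultimately obtain b where b: "b \<in> - range \<sigma>" "\<not> b islimpt UNIV"
    using obtain_isolated_in_open[OF finite_limpts] by blast
  obtain a where "\<not> a islimpt UNIV" "spike_target a = b" using spike_target_surj[OF b(2)] by blast
  then have "\<sigma> a = b" by (simp add: sigma_isolated)
  with b(1) show False by auto
qed

lemma sigma_limpt:
  assumes p: "p islimpt UNIV"
  shows "\<sigma> p islimpt UNIV"
proof (rule ccontr)
  assume "\<not> \<sigma> p islimpt UNIV"
  then have clopen: "open {\<sigma> p}" "closed {\<sigma> p}" by (simp_all add: islimpt_UNIV_iff)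
  have U: "open (pullback {\<sigma> p})" "p \<in> pullback {\<sigma> p}"
    using clopen_pullback[OF clopen] sigma_in_clopen_iff[OF clopen, of p] by simp_all
  obtain a1 a2 where a: "a1 \<in> pullback {\<sigma> p}" "a2 \<in> pullback {\<sigma> p}" "a1 \<noteq> a2"
      "\<not> a1 islimpt UNIV" "\<not> a2 islimpt UNIV"
    by (rule two_isolated_near_limpt[OF finite_limpts U p])
  then have "spike_target a1 = spike_target a2"
    using isolated_in_pullback_iff[OF clopen] by simp
  from inj_onD[OF inj_on_spike_target this] a show False by simp
qed

lemma sigma_limpt_iff: "\<sigma> x islimpt UNIV \<longleftrightarrow> x islimpt UNIV"
  using sigma_limpt sigma_isolated F_spike(1) by metis

lemma sigma_image_limpts: "\<sigma> ` {x. x islimpt UNIV} = {x. x islimpt UNIV}"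
proof
  show "\<sigma> ` {x. x islimpt UNIV} \<subseteq> {x. x islimpt UNIV}" by (auto simp: sigma_limpt_iff)
  show "{x. x islimpt UNIV} \<subseteq> \<sigma> ` {x. x islimpt UNIV}"
  proof
    fix q :: 'a assume "q \<in> {x. x islimpt UNIV}"
    moreover obtain s where "q = \<sigma> s" using surj_sigma by blast
    ultimately show "q \<in> \<sigma> ` {x. x islimpt UNIV}" by (simp add: sigma_limpt_iff)
  qed
qed

text \<open>On the finitely many limit points \<open>\<sigma>\<close> is a surjective self-map, hence injective.\<close>

lemma inj_sigma: "inj \<sigma>"
proof (rule injI)
  fix x y assume eq: "\<sigma> x = \<sigma> y"
  have inj_limpts: "inj_on \<sigma> {x. x islimpt UNIV}"
    using finite_limpts sigma_image_limpts by (intro eq_card_imp_inj_on) simp_all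
  have "x islimpt UNIV \<longleftrightarrow> y islimpt UNIV" using eq sigma_limpt_iff by metis
  then consider "x islimpt UNIV" "y islimpt UNIV" | "\<not> x islimpt UNIV" "\<not> y islimpt UNIV" by blast
  then show "x = y"
  proof cases
    case 1
    then show ?thesis using inj_onD[OF inj_limpts eq] by simp
  next
    case 2
    then have "spike_target x = spike_target y" using eq by (simp add: sigma_isolated)
    from inj_onD[OF inj_on_spike_target this] 2 show ?thesis by simp
  qed
qed

lemma ex_homeomorphism_sigma: "\<exists>\<sigma>'. homeomorphism UNIV UNIV \<sigma> \<sigma>'"
  using homeomorphism_compact[OF compact_UNIV continuous_on_sigma surj_sigma inj_sigma] .

lemma F_unimodular_at_sigma:
  assumes s: "unimodular s" and a: "\<not> a islimpt UNIV"
  shows "apply_bcontfun (F s) (\<sigma> a) = apply_bcontfun alpha a * apply_bcontfun s a"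
proof -
  obtain \<sigma>' where h: "homeomorphism UNIV UNIV \<sigma> \<sigma>'" using ex_homeomorphism_sigma by blast
  then have \<sigma>': "continuous_on UNIV \<sigma>'" "\<And>x. \<sigma>' (\<sigma> x) = x" by (simp_all add: homeomorphism_def)
  define y where "y = Bcontfun (\<lambda>t. apply_bcontfun alpha (\<sigma>' t) * apply_bcontfun s (\<sigma>' t))"
  have y: "apply_bcontfun y t = apply_bcontfun alpha (\<sigma>' t) * apply_bcontfun s (\<sigma>' t)" for t
  proof -
    have "continuous_on UNIV (\<lambda>t. apply_bcontfun alpha (\<sigma>' t))"
      "continuous_on UNIV (\<lambda>t. apply_bcontfun s (\<sigma>' t))"
      by (rule continuous_on_compose2[OF continuous_on_apply_bcontfun[of UNIV] \<sigma>'(1)], simp)+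
    then show ?thesis
      unfolding y_def by (subst apply_Bcontfun_compact[OF compact_UNIV]) (auto intro: continuous_on_mult)
  qed
  have "unimodular y" using unimodular_alpha s by (simp add: unimodular_def y abs_mult)
  have "apply_bcontfun (Finv y) = apply_bcontfun s"
  proof (rule continuous_on_eq_if_eq_on_isolated[OF finite_limpts])
    fix b :: 'a assume b: "\<not> b islimpt UNIV"
    show "apply_bcontfun (Finv y) b = apply_bcontfun s b"
      using Finv_apply_isolated[OF \<open>unimodular y\<close> b] sigma_isolated[OF b, symmetric]
        alpha_isolated[OF b] spike_sign_cases[OF b] by (auto simp: y \<sigma>'(2))
  qed simp_all
  then have "Finv y = s" by (intro bcontfun_eqI) simp
  then have "F s = y" using F_Finv[OF norm_le_one_if_unimodular[OF \<open>unimodular y\<close>]] by simp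
  then show ?thesis by (simp add: y \<sigma>'(2))
qed

lemma F_near_sign_at_sigma:
  assumes f: "norm f \<le> 1" and a: "\<not> a islimpt UNIV" and \<epsilon>: "\<epsilon> = 1 \<or> \<epsilon> = -1"
  shows "\<bar>apply_bcontfun (F f) (\<sigma> a) - \<epsilon> * apply_bcontfun alpha a\<bar> \<le> max 1 \<bar>apply_bcontfun f a - \<epsilon>\<bar>"
proof (rule field_le_epsilon)
  fix \<delta> :: real assume "0 < \<delta>"
  obtain C where C: "open C" "closed C" "apply_bcontfun (clopen_sign C) a = \<epsilon>"
      "dist f (clopen_sign C) \<le> max (1 + \<delta>) \<bar>apply_bcontfun f a - \<epsilon>\<bar>"
    by (rule clopen_sign_near[OF compact_UNIV finite_limpts f a \<epsilon> \<open>0 < \<delta>\<close>])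
  have "apply_bcontfun (F (clopen_sign C)) (\<sigma> a) = \<epsilon> * apply_bcontfun alpha a"
    using F_unimodular_at_sigma[OF unimodular_clopen_sign[OF C(1,2)] a] C(3) by simp
  moreover have "\<bar>apply_bcontfun (F f) (\<sigma> a) - apply_bcontfun (F (clopen_sign C)) (\<sigma> a)\<bar>
      \<le> dist f (clopen_sign C)"
    by (rule abs_diff_F_apply_le[OF f norm_le_one_if_unimodular[OF unimodular_clopen_sign[OF C(1,2)]]])
  moreover have "max (1 + \<delta>) \<bar>apply_bcontfun f a - \<epsilon>\<bar> \<le> max 1 \<bar>apply_bcontfun f a - \<epsilon>\<bar> + \<delta>"
    using \<open>0 < \<delta>\<close> by (simp add: max_def)
  ultimately show "\<bar>apply_bcontfun (F f) (\<sigma> a) - \<epsilon> * apply_bcontfun alpha a\<bar>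
      \<le> max 1 \<bar>apply_bcontfun f a - \<epsilon>\<bar> + \<delta>"
    using C(4) by linarith
qed

lemma F_preserves_signs:
  assumes f: "norm f \<le> 1" and a: "\<not> a islimpt UNIV"
  defines "u \<equiv> apply_bcontfun f a" and "v \<equiv> apply_bcontfun (F f) (\<sigma> a)"
  shows "u = 0 \<Longrightarrow> v = 0"
    and "u * apply_bcontfun alpha a < 0 \<Longrightarrow> v \<le> 0"
    and "u * apply_bcontfun alpha a > 0 \<Longrightarrow> v \<ge> 0"
proof -
  have \<alpha>: "apply_bcontfun alpha a = 1 \<or> apply_bcontfun alpha a = -1"
    using alpha_isolated[OF a] spike_sign_cases[OF a] by simp
  have "\<bar>u\<bar> \<le> 1" using abs_apply_le_norm_bcontfun[of f a] f unfolding u_def by linarith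
  \<comment> \<open>If \<open>\<epsilon> u \<ge> 0\<close> then \<open>\<bar>u - \<epsilon>\<bar> \<le> 1\<close>, so \<open>v\<close> lies within distance one of \<open>\<epsilon> \<alpha>(a) = \<plusminus>1\<close>.\<close>
  have sign: "0 \<le> \<epsilon> * apply_bcontfun alpha a * v" if \<epsilon>: "\<epsilon> = 1 \<or> \<epsilon> = -1" "0 \<le> \<epsilon> * u" for \<epsilon>
    using F_near_sign_at_sigma[OF f a \<epsilon>(1)] \<epsilon> \<alpha> \<open>\<bar>u\<bar> \<le> 1\<close>
    unfolding u_def[symmetric] v_def[symmetric] by (auto simp: abs_le_iff)
  show "u = 0 \<Longrightarrow> v = 0" using sign[of 1] sign[of "-1"] \<alpha> by auto
  show "u * apply_bcontfun alpha a < 0 \<Longrightarrow> v \<le> 0"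
    using sign[of "- apply_bcontfun alpha a"] \<alpha> by (auto simp: mult_less_0_iff)
  show "u * apply_bcontfun alpha a > 0 \<Longrightarrow> v \<ge> 0"
    using sign[of "apply_bcontfun alpha a"] \<alpha> by (auto simp: zero_less_mult_iff)
qed

end

theorem lemma3p1:
  fixes F :: "('a::t2_space \<Rightarrow>\<^sub>C real) \<Rightarrow> ('a \<Rightarrow>\<^sub>C real)"
  assumes "compact (UNIV :: 'a set)"
    and "infinite (UNIV :: 'a set)"
    and "finite {x :: 'a. x islimpt UNIV}"
    and "bij_betw F {f. norm f \<le> 1} {f. norm f \<le> 1}"
    and "\<forall>f \<in> {f. norm f \<le> 1}. \<forall>g \<in> {f. norm f \<le> 1}. dist (F f) (F g) \<le> dist f g"
  shows "\<exists>(\<sigma> :: 'a \<Rightarrow> 'a) \<sigma>' (\<alpha> :: 'a \<Rightarrow> real).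
           homeomorphism UNIV UNIV \<sigma> \<sigma>' \<and>
           continuous_on UNIV \<alpha> \<and> (\<forall>x. \<alpha> x \<in> {-1, 1}) \<and>
           (\<forall>f. norm f \<le> 1 \<longrightarrow> (\<forall>a. \<not> a islimpt UNIV \<longrightarrow>
              (apply_bcontfun f a = 0 \<longrightarrow> apply_bcontfun (F f) (\<sigma> a) = 0) \<and>
              (apply_bcontfun f a * \<alpha> a < 0 \<longrightarrow> apply_bcontfun (F f) (\<sigma> a) \<le> 0) \<and>
              (apply_bcontfun f a * \<alpha> a > 0 \<longrightarrow> apply_bcontfun (F f) (\<sigma> a) \<ge> 0)))"
proof -
  interpret nonexpansive_ball_bijection F
    using assms(1,3,4,5) by unfold_locales auto
  obtain \<sigma>' where "homeomorphism UNIV UNIV \<sigma> \<sigma>'" using ex_homeomorphism_sigma by blast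
  moreover have "apply_bcontfun alpha x \<in> {-1, 1}" for x
    using unimodular_alpha unfolding unimodular_def by (metis abs_if insertI1 insertI2 minus_minus)
  ultimately show ?thesis
    using F_preserves_signs
    by (intro exI[of _ \<sigma>] exI[of _ \<sigma>'] exI[of _ "apply_bcontfun alpha"] conjI allI impI) auto
qed

end
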